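(* Let $T$ be a (finite) tree with an even number of vertices. Then there exists a labeling $f:E(T)\to\{-1,+1\}$ such that $|e_f(-1)-e_f(1)|=1$, $|f(v)|\le 1$ for every vertex $v$ of $T$, and $|v_f(-1)-v_f(1)|=2$.
   Context: Given a labeling $f:E(T)\to\{-1,+1\}$, for each vertex $v$ define $f(v)=\sum_{e\in I(v)} f(e)$, where $I(v)$ is the set of edges incident to $v$. For an integer $c$, $e_f(c)$ denotes the number of edges with label $c$, and $v_f(c)$ the number of vertices $v$ with $f(v)=c$. *)

theory Defs
  imports Main
begin

definition simple_graph :: "'a set \<Rightarrow> 'a set set \<Rightarrow> bool" where
  "simple_graph V E \<longleftrightarrow> finite V \<and> (\<forall>e\<in>E. e \<subseteq> V \<and> card e = 2)"

definition connected_graph :: "'a set \<Rightarrow> 'a set set \<Rightarrow> bool" where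
  "connected_graph V E \<longleftrightarrow> (\<forall>u\<in>V. \<forall>v\<in>V. (\<lambda>x y. {x, y} \<in> E)\<^sup>*\<^sup>* u v)"

definition is_cycle :: "'a set set \<Rightarrow> 'a list \<Rightarrow> bool" where
  "is_cycle E vs \<longleftrightarrow> length vs \<ge> 3 \<and> distinct vs
     \<and> (\<forall>i. Suc i < length vs \<longrightarrow> {vs ! i, vs ! Suc i} \<in> E)
     \<and> {last vs, hd vs} \<in> E"

definition acyclic_graph :: "'a set set \<Rightarrow> bool" where
  "acyclic_graph E \<longleftrightarrow> \<not> (\<exists>vs. is_cycle E vs)"

definition is_tree :: "'a set \<Rightarrow> 'a set set \<Rightarrow> bool" where
  "is_tree V E \<longleftrightarrow> simple_graph V E \<and> V \<noteq> {} \<and> connected_graph V E \<and> acyclic_graph E"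

definition vertex_label :: "'a set set \<Rightarrow> ('a set \<Rightarrow> int) \<Rightarrow> 'a \<Rightarrow> int" where
  "vertex_label E f v = (\<Sum>e\<in>{e\<in>E. v \<in> e}. f e)"

definition edge_count :: "'a set set \<Rightarrow> ('a set \<Rightarrow> int) \<Rightarrow> int \<Rightarrow> nat" where
  "edge_count E f c = card {e\<in>E. f e = c}"

definition vertex_count :: "'a set \<Rightarrow> 'a set set \<Rightarrow> ('a set \<Rightarrow> int) \<Rightarrow> int \<Rightarrow> nat" where
  "vertex_count V E f c = card {v\<in>V. vertex_label E f v = c}"

end

(*
  Call a labelling of the edges by +1 and -1 balanced if every vertex sum lies in {-1, 0, 1}.
  It suffices to find a balanced labelling of a tree of even order whose edge sum is +1 or -1:
  that sum is e_f(1) - e_f(-1), and by double counting v_f(1) - v_f(-1), the sum of all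
  vertex sums, is twice it.

  The end of a longest path shows that
  a tree with at least three vertices contains a path u - w - x where u is a leaf and either
  x is a leaf or w has degree 2. Deleting u together with x (respectively w) leaves a tree
  of even order; labelling {u, w} by -t and {w, x} by t keeps the edge sum and the sum at w,
  gives u the sum -t, and t can be chosen so that the sum at x stays in {-1, 0, 1}.
*)

theory Submission
  imports Defs
begin

definition nbrs :: "'a set set \<Rightarrow> 'a \<Rightarrow> 'a set" where
  "nbrs E x = {y. {x, y} \<in> E}"

definition delete_vertex :: "'a \<Rightarrow> 'a set set \<Rightarrow> 'a set set" where
  "delete_vertex u E = {e\<in>E. u \<notin> e}"

definition is_path :: "'a set \<Rightarrow> 'a set set \<Rightarrow> 'a list \<Rightarrow> bool" where
  "is_path V E vs \<longleftrightarrow> distinct vs \<and> set vs \<subseteq> V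
     \<and> (\<forall>i. Suc i < length vs \<longrightarrow> {vs ! i, vs ! Suc i} \<in> E)"

definition balanced_labeling :: "'a set set \<Rightarrow> ('a set \<Rightarrow> int) \<Rightarrow> bool" where
  "balanced_labeling E f \<longleftrightarrow>
     (\<forall>e\<in>E. f e \<in> {-1, 1}) \<and> (\<forall>v. \<bar>vertex_label E f v\<bar> \<le> 1)"

lemma simple_graph_edgeD:
  assumes "simple_graph V E" "{a, b} \<in> E"
  shows "a \<noteq> b" "a \<in> V" "b \<in> V"
  using assms by (auto simp: simple_graph_def)

lemma simple_graph_finite_edges: "simple_graph V E \<Longrightarrow> finite E"
  unfolding simple_graph_def by (auto intro: finite_subset[of E "Pow V"])

lemma nbrs_delete_vertex: "x \<noteq> u \<Longrightarrow> nbrs (delete_vertex u E) x = nbrs E x - {u}"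
  by (auto simp: nbrs_def delete_vertex_def)

lemma acyclic_graph_subset: "acyclic_graph E \<Longrightarrow> E' \<subseteq> E \<Longrightarrow> acyclic_graph E'"
  unfolding acyclic_graph_def is_cycle_def by blast

lemma is_path_Cons:
  "is_path V E (y # vs) \<longleftrightarrow>
     y \<notin> set vs \<and> y \<in> V \<and> is_path V E vs \<and> (vs \<noteq> [] \<longrightarrow> {y, hd vs} \<in> E)"
  by (cases vs) (auto simp: is_path_def nth_Cons split: nat.splits)

lemma acyclic_path_edge_consecutive:
  assumes sg: "simple_graph V E" and acyc: "acyclic_graph E" and p: "is_path V E vs"
    and ij: "i < length vs" "j < length vs" and e: "{vs ! i, vs ! j} \<in> E"
  shows "j = Suc i \<or> i = Suc j"
proof -
  have chord_free: "j \<le> Suc i"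
    if lt: "i < j" and bound: "j < length vs" and chord: "{vs ! i, vs ! j} \<in> E" for i j
  proof (rule ccontr)
    assume "\<not> j \<le> Suc i"
    let ?cs = "take (Suc (j - i)) (drop i vs)"
    have len: "length ?cs = Suc (j - i)" using lt bound by auto
    have nth: "?cs ! k = vs ! (i + k)" if "k < Suc (j - i)" for k
      using that lt bound by auto
    have "is_cycle E ?cs"
      unfolding is_cycle_def
    proof (intro conjI allI impI)
      show "3 \<le> length ?cs" using len \<open>\<not> j \<le> Suc i\<close> by auto
      show "distinct ?cs" using p by (auto simp: is_path_def)
      fix k assume "Suc k < length ?cs"
      then show "{?cs ! k, ?cs ! Suc k} \<in> E"
        using nth[of k] nth[of "Suc k"] len p lt bound by (auto simp: is_path_def)
    next
      have "last ?cs = vs ! j" "hd ?cs = vs ! i"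
        using len nth[of "j - i"] nth[of 0] lt bound by (simp_all add: last_conv_nth hd_conv_nth)
      then show "{last ?cs, hd ?cs} \<in> E" using chord by (simp add: insert_commute)
    qed
    then show False using acyc by (auto simp: acyclic_graph_def)
  qed
  have "i \<noteq> j" using e simple_graph_edgeD(1)[OF sg] by blast
  then consider "i < j" | "j < i" by linarith
  then show ?thesis
  proof cases
    case 1
    then show ?thesis using chord_free[of i j] ij e by auto
  next
    case 2
    then show ?thesis using chord_free[of j i] ij e by (auto simp: insert_commute)
  qed
qed

lemma connected_graph_nbrs_closed:
  assumes "connected_graph V E" "a \<in> V" "a \<in> S" "\<And>x. x \<in> S \<Longrightarrow> nbrs E x \<subseteq> S"
  shows "V \<subseteq> S"
proof
  fix v assume "v \<in> V"
  then have "(\<lambda>x y. {x, y} \<in> E)\<^sup>*\<^sup>* a v" using assms(1,2) unfolding connected_graph_def by blast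
  then show "v \<in> S"
    by (induction rule: rtranclp_induct) (use assms(3,4) in \<open>auto simp: nbrs_def\<close>)
qed

lemma connected_graph_subset_pair:
  assumes "connected_graph V E" "a \<in> V" "nbrs E a \<subseteq> {b}" "nbrs E b \<subseteq> {a}"
  shows "V \<subseteq> {a, b}"
  using connected_graph_nbrs_closed[OF assms(1,2), of "{a, b}"] assms(3,4) by auto

lemma longest_path_exists:
  assumes "simple_graph V E" "{a, b} \<in> E"
  obtains vs where "is_path V E vs" "2 \<le> length vs"
    "\<And>ws. is_path V E ws \<Longrightarrow> length ws \<le> length vs"
proof -
  have "is_path V E [a, b]"
    using simple_graph_edgeD[OF assms] assms(2) by (auto simp: is_path_def less_Suc_eq)
  moreover have "length ws < Suc (card V)" if "is_path V E ws" for ws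
  proof -
    have "length ws = card (set ws)" "set ws \<subseteq> V"
      using that by (auto simp: is_path_def distinct_card)
    then show ?thesis using card_mono[of V "set ws"] assms(1) by (simp add: simple_graph_def)
  qed
  ultimately obtain vs where "is_path V E vs" "\<forall>ws. is_path V E ws \<longrightarrow> length ws \<le> length vs"
    using ex_has_greatest_nat[of "is_path V E" "[a, b]" length "Suc (card V)"] by blast
  moreover from this have "2 \<le> length vs" using \<open>is_path V E [a, b]\<close> by fastforce
  ultimately show thesis using that by blast
qed

lemma longest_path_starts_at_leaf:
  assumes sg: "simple_graph V E" and acyc: "acyclic_graph E"
    and p: "is_path V E (v0 # v1 # vs)"
    and longest: "\<And>ws. is_path V E ws \<Longrightarrow> length ws \<le> length (v0 # v1 # vs)"
  shows "nbrs E v0 = {v1}"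
proof
  show "{v1} \<subseteq> nbrs E v0" using p by (auto simp: is_path_def nbrs_def)
  show "nbrs E v0 \<subseteq> {v1}"
  proof
    fix y assume "y \<in> nbrs E v0"
    then have e: "{v0, y} \<in> E" by (simp add: nbrs_def)
    have "y \<in> set (v0 # v1 # vs)"
    proof (rule ccontr)
      assume "y \<notin> set (v0 # v1 # vs)"
      then have "is_path V E (y # v0 # v1 # vs)"
        using p e simple_graph_edgeD[OF sg e] by (simp add: is_path_Cons insert_commute)
      then show False using longest by fastforce
    qed
    then obtain k where k: "k < length (v0 # v1 # vs)" "y = (v0 # v1 # vs) ! k"
      by (metis in_set_conv_nth)
    then have "k = 1" using acyclic_path_edge_consecutive[OF sg acyc p, of 0 k] e by auto
    then show "y \<in> {v1}" using k by simp
  qed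
qed

lemma longest_path_off_path_nbr_is_leaf:
  assumes sg: "simple_graph V E" and acyc: "acyclic_graph E"
    and p: "is_path V E (v0 # v1 # vs)"
    and longest: "\<And>ws. is_path V E ws \<Longrightarrow> length ws \<le> length (v0 # v1 # vs)"
    and z: "{v1, z} \<in> E" "z \<notin> set (v0 # v1 # vs)"
  shows "nbrs E z = {v1}"
proof -
  have "{z, v1} \<in> E" using z(1) by (simp add: insert_commute)
  then have "is_path V E (z # v1 # vs)"
    using p z simple_graph_edgeD[OF sg z(1)] by (simp add: is_path_Cons)
  then show ?thesis using longest_path_starts_at_leaf[OF sg acyc] longest by simp
qed

lemma acyclic_path_second_vertex_nbr:
  assumes sg: "simple_graph V E" and acyc: "acyclic_graph E"
    and p: "is_path V E (v0 # v1 # rest)"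
    and y: "y \<in> set (v0 # v1 # rest)" "{v1, y} \<in> E"
  shows "y = v0 \<or> (rest \<noteq> [] \<and> y = hd rest)"
proof -
  obtain k where k: "k < length (v0 # v1 # rest)" "y = (v0 # v1 # rest) ! k"
    using y(1) unfolding in_set_conv_nth by blast
  then have "k = 2 \<or> k = 0"
    using acyclic_path_edge_consecutive[OF sg acyc p, of 1 k] y(2) by auto
  then show ?thesis using k by (auto simp: hd_conv_nth)
qed

lemma is_tree_delete_leaf:
  assumes t: "is_tree V E" and leaf: "nbrs E u = {w}"
  shows "is_tree (V - {u}) (delete_vertex u E)"
proof -
  have sg: "simple_graph V E" using t by (simp add: is_tree_def)
  have uw: "{u, w} \<in> E" using leaf by (auto simp: nbrs_def)
  note uw_edge = simple_graph_edgeD[OF sg uw]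
  let ?E = "delete_vertex u E"
  let ?R = "\<lambda>x y. {x, y} \<in> E" and ?R' = "\<lambda>x y. {x, y} \<in> ?E"
  define proj where "proj z = (if z = u then w else z)" for z
  have proj_walk: "?R'\<^sup>*\<^sup>* (proj x) (proj y)" if "?R\<^sup>*\<^sup>* x y" for x y
    using that
  proof (induction rule: rtranclp_induct)
    case (step y z)
    have "proj y = proj z \<or> ?R' (proj y) (proj z)"
    proof (cases "y = u \<or> z = u")
      case True
      then have "y \<in> nbrs E u \<or> z \<in> nbrs E u"
        using step(2) by (auto simp: nbrs_def insert_commute)
      then show ?thesis using True leaf uw_edge(1) by (auto simp: proj_def)
    next
      case False
      then show ?thesis using step(2) by (auto simp: proj_def delete_vertex_def)
    qed
    with step(3) show ?case by (auto intro: rtranclp.rtrancl_into_rtrancl)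
  qed simp
  have "connected_graph (V - {u}) ?E"
    unfolding connected_graph_def
  proof (intro ballI)
    fix x y assume xy: "x \<in> V - {u}" "y \<in> V - {u}"
    then have "?R\<^sup>*\<^sup>* x y" using t by (auto simp: is_tree_def connected_graph_def)
    from proj_walk[OF this] show "?R'\<^sup>*\<^sup>* x y" using xy by (simp add: proj_def)
  qed
  moreover have "simple_graph (V - {u}) ?E"
    using sg by (auto simp: simple_graph_def delete_vertex_def)
  moreover have "acyclic_graph ?E"
    using t acyclic_graph_subset[of E ?E] by (auto simp: is_tree_def delete_vertex_def)
  moreover have "V - {u} \<noteq> {}" using uw_edge by auto
  ultimately show ?thesis by (simp add: is_tree_def)
qed

lemma insert_leaf_edge:
  assumes sg: "simple_graph V E" and leaf: "nbrs E u = {w}"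
  shows "E = insert {u, w} (delete_vertex u E)"
proof -
  have "e = {u, w}" if "e \<in> E" "u \<in> e" for e
  proof -
    obtain a b where "e = {a, b}"
      using sg \<open>e \<in> E\<close> by (auto simp: simple_graph_def card_2_iff)
    then have "e = {u, if a = u then b else a}" using \<open>u \<in> e\<close> by auto
    moreover from this have "(if a = u then b else a) \<in> nbrs E u"
      using \<open>e \<in> E\<close> by (simp add: nbrs_def)
    ultimately show ?thesis using leaf by simp
  qed
  moreover have "{u, w} \<in> E" using leaf by (auto simp: nbrs_def)
  ultimately show ?thesis unfolding delete_vertex_def by blast
qed

lemma is_tree_two_vertices:
  assumes t: "is_tree V E" and V: "V = {a, b}" "a \<noteq> b"
  shows "E = {{a, b}}"
proof -
  have sg: "simple_graph V E" using t by (simp add: is_tree_def)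
  have "E \<subseteq> {{a, b}}"
  proof
    fix e assume "e \<in> E"
    then have "e \<subseteq> {a, b}" "card e = 2" using sg V by (auto simp: simple_graph_def)
    then show "e \<in> {{a, b}}" by (auto simp: card_2_iff)
  qed
  moreover have "E \<noteq> {}"
  proof
    assume "E = {}"
    then have "V \<subseteq> {a}"
      using t V connected_graph_nbrs_closed[of V E a "{a}"] by (auto simp: is_tree_def nbrs_def)
    then show False using V by auto
  qed
  ultimately show ?thesis by blast
qed

lemma tree_cherry_or_pendant_path:
  assumes t: "is_tree V E" and three: "3 \<le> card V"
  obtains u w x where "u \<noteq> x" "nbrs E u = {w}" "{w, x} \<in> E"
    "nbrs E x = {w} \<or> nbrs E w = {u, x}"
proof -
  have sg: "simple_graph V E" and con: "connected_graph V E" and acyc: "acyclic_graph E"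
    using t by (auto simp: is_tree_def)
  have not_pair: "\<not> V \<subseteq> {a, b}" for a b
  proof
    assume "V \<subseteq> {a, b}"
    then have "card V \<le> card {a, b}" by (intro card_mono) auto
    also have "\<dots> \<le> 2" by (simp add: card_insert_if)
    finally show False using three by simp
  qed
  obtain a where a: "a \<in> V" using t by (auto simp: is_tree_def)
  have "nbrs E a \<noteq> {}" using connected_graph_subset_pair[OF con a, of a] not_pair[of a a] by auto
  then obtain b where "{a, b} \<in> E" by (auto simp: nbrs_def)
  then obtain vs where p: "is_path V E vs" and "2 \<le> length vs"
    and longest: "\<And>ws. is_path V E ws \<Longrightarrow> length ws \<le> length vs"
    using longest_path_exists[OF sg] by blast
  then obtain v0 v1 rest where vs: "vs = v0 # v1 # rest"
    by (metis Suc_le_length_iff numeral_2_eq_2)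
  note p = p[unfolded vs] and longest = longest[unfolded vs]
  have leaf: "nbrs E v0 = {v1}" by (rule longest_path_starts_at_leaf[OF sg acyc p longest])
  show thesis
  proof (cases "nbrs E v1 \<subseteq> set (v0 # v1 # rest)")
    case False
    then obtain z where z: "{v1, z} \<in> E" "z \<notin> set (v0 # v1 # rest)" by (auto simp: nbrs_def)
    moreover have "v0 \<noteq> z" using z(2) by auto
    ultimately show thesis
      using that[where u = v0 and w = v1 and x = z] leaf
        longest_path_off_path_nbr_is_leaf[OF sg acyc p longest] by blast
  next
    case True
    have nbr_on_path: "y = v0 \<or> (rest \<noteq> [] \<and> y = hd rest)" if "y \<in> nbrs E v1" for y
      using acyclic_path_second_vertex_nbr[OF sg acyc p] True that by (auto simp: nbrs_def)
    have v0v1: "v0 \<in> nbrs E v1" using leaf by (auto simp: nbrs_def insert_commute)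
    show thesis
    proof (cases rest)
      case Nil
      have "v0 \<in> V" using p by (simp add: is_path_def)
      then have "V \<subseteq> {v0, v1}"
        using connected_graph_subset_pair[OF con, of v0 v1] leaf nbr_on_path Nil by auto
      then show thesis using not_pair by blast
    next
      case (Cons x rest')
      have "{v1, x} \<in> E" using p Cons by (simp add: is_path_Cons)
      moreover from this have "nbrs E v1 = {v0, x}"
        using nbr_on_path v0v1 Cons by (auto simp: nbrs_def)
      moreover have "v0 \<noteq> x" using p Cons by (simp add: is_path_Cons)
      ultimately show thesis using that[where u = v0 and w = v1 and x = x] leaf by blast
    qed
  qed
qed

lemma tree_two_vertex_reduction:
  assumes t: "is_tree V E" and three: "3 \<le> card V"
  obtains V' E' u w x where "is_tree V' E'" "card V' = card V - 2"
    "E = insert {u, w} (insert {w, x} E')" "{u, w} \<notin> E'" "{w, x} \<notin> E'" "u \<noteq> x"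
    "\<And>e. e \<in> E' \<Longrightarrow> u \<notin> e"
proof -
  have sg: "simple_graph V E" using t by (simp add: is_tree_def)
  obtain u w x where ux: "u \<noteq> x" and leaf: "nbrs E u = {w}" and wx: "{w, x} \<in> E"
    and pendant: "nbrs E x = {w} \<or> nbrs E w = {u, x}"
    by (rule tree_cherry_or_pendant_path[OF t three])
  have "w \<in> nbrs E u" using leaf by simp
  then have uw: "{u, w} \<in> E" by (simp add: nbrs_def)
  note uw_edge = simple_graph_edgeD[OF sg uw] and wx_edge = simple_graph_edgeD[OF sg wx]
  define E1 where "E1 = delete_vertex u E"
  have t1: "is_tree (V - {u}) E1" unfolding E1_def using is_tree_delete_leaf[OF t leaf] .
  obtain r s where rs: "{r, s} = {w, x}" and leaf1: "nbrs E1 r = {s}"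
  proof (cases "nbrs E x = {w}")
    case True
    then have "nbrs E1 x = {w}" using ux uw_edge(1) by (simp add: E1_def nbrs_delete_vertex)
    then show thesis using that[of x w] by (simp add: insert_commute)
  next
    case False
    then have "nbrs E1 w = {x}" using pendant ux uw_edge(1) by (auto simp: E1_def nbrs_delete_vertex)
    then show thesis using that[of w x] by simp
  qed
  define E2 where "E2 = delete_vertex r E1"
  have t2: "is_tree (V - {u} - {r}) E2" unfolding E2_def using is_tree_delete_leaf[OF t1 leaf1] .
  have "simple_graph (V - {u}) E1" using t1 by (simp add: is_tree_def)
  then have "E1 = insert {r, s} E2" unfolding E2_def by (rule insert_leaf_edge[OF _ leaf1])
  then have E: "E = insert {u, w} (insert {w, x} E2)"
    using insert_leaf_edge[OF sg leaf] rs by (simp add: E1_def)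
  have r: "r \<in> {w, x}" using rs by blast
  then have "card (V - {u} - {r}) = card V - 2"
    using uw_edge wx_edge ux sg by (auto simp: simple_graph_def)
  moreover have E2_avoids: "u \<notin> e" "r \<notin> e" if "e \<in> E2" for e
    using that by (auto simp: E2_def E1_def delete_vertex_def)
  moreover have "{u, w} \<notin> E2" "{w, x} \<notin> E2" using E2_avoids r by blast+
  ultimately show thesis using that[OF t2 _ E _ _ ux] by blast
qed

lemma vertex_label_eq_0:
  assumes "\<And>e. e \<in> E \<Longrightarrow> v \<notin> e"
  shows "vertex_label E f v = 0"
proof -
  have "{e \<in> E. v \<in> e} = {}" using assms by blast
  then show ?thesis unfolding vertex_label_def by (metis sum.empty)
qed

lemma vertex_label_cong:
  "(\<And>e. e \<in> E \<Longrightarrow> f e = g e) \<Longrightarrow> vertex_label E f v = vertex_label E g v"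
  by (auto simp: vertex_label_def intro: sum.cong)

lemma vertex_label_insert:
  assumes "finite E" "e \<notin> E"
  shows "vertex_label (insert e E) f v = vertex_label E f v + (if v \<in> e then f e else 0)"
proof (cases "v \<in> e")
  case True
  then have "{d \<in> insert e E. v \<in> d} = insert e {d \<in> E. v \<in> d}" by auto
  then show ?thesis using True assms by (simp add: vertex_label_def)
next
  case False
  then have "{d \<in> insert e E. v \<in> d} = {d \<in> E. v \<in> d}" by auto
  then show ?thesis using False by (simp add: vertex_label_def)
qed

lemma balanced_labeling_extend:
  assumes fin: "finite E" and new: "{u, w} \<notin> E" "{w, x} \<notin> E" and ux: "u \<noteq> x"
    and isolated: "\<And>e. e \<in> E \<Longrightarrow> u \<notin> e" and g: "balanced_labeling E g"
  obtains f where "balanced_labeling (insert {u, w} (insert {w, x} E)) f"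
    "sum f (insert {u, w} (insert {w, x} E)) = sum g E"
proof -
  let ?E = "insert {u, w} (insert {w, x} E)" and ?L = "vertex_label E g"
  define t where "t = (if ?L x = 0 then 1 else - ?L x)"
  define f where "f = g({w, x} := t, {u, w} := - t)"
  have edges: "{u, w} \<noteq> {w, x}" using ux by (auto simp: doubleton_eq_iff)
  have f_new: "f {u, w} = - t" "f {w, x} = t" using edges by (auto simp: f_def)
  have agree: "f e = g e" if "e \<in> E" for e using that new by (auto simp: f_def)
  have "vertex_label ?E f v = vertex_label E f v
      + (if v \<in> {w, x} then f {w, x} else 0) + (if v \<in> {u, w} then f {u, w} else 0)" for v
    using vertex_label_insert[of "insert {w, x} E" "{u, w}"] vertex_label_insert[of E "{w, x}"]
      fin new edges by simp
  then have label: "vertex_label ?E f v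
      = ?L v + (if v \<in> {w, x} then t else 0) + (if v \<in> {u, w} then - t else 0)" for v
    by (simp only: vertex_label_cong[of E f g, OF agree] f_new)
  have L_bound: "\<bar>?L v\<bar> \<le> 1" for v using g by (simp add: balanced_labeling_def)
  have t: "t \<in> {-1, 1}" "\<bar>?L x + t\<bar> \<le> 1" using L_bound[of x] unfolding t_def by auto
  have "?L u = 0" using isolated by (rule vertex_label_eq_0)
  have "\<bar>vertex_label ?E f v\<bar> \<le> 1" for v
  proof -
    consider "v = u" | "v = x" | "v \<noteq> u" "v \<noteq> x" by blast
    then show ?thesis
    proof cases
      case 1
      then show ?thesis using \<open>?L u = 0\<close> t(1) ux unfolding label by auto
    next
      case 2
      then show ?thesis using L_bound[of w] t(2) ux unfolding label by auto
    next
      case 3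
      then show ?thesis using L_bound[of v] unfolding label by auto
    qed
  qed
  moreover have "\<forall>e\<in>?E. f e \<in> {-1, 1}"
    using g t f_new agree by (auto simp: balanced_labeling_def)
  moreover have "sum f E = sum g E" using agree by (rule sum.cong[OF refl])
  then have "sum f ?E = sum g E" using fin new edges f_new by simp
  ultimately show thesis using that[of f] unfolding balanced_labeling_def by blast
qed

lemma even_tree_balanced_labeling:
  assumes "is_tree V E" "even (card V)"
  shows "\<exists>f. balanced_labeling E f \<and> sum f E \<in> {-1, 1}"
  using assms
proof (induction "card V" arbitrary: V E rule: less_induct)
  case less
  have t: "is_tree V E" by fact
  have "card V \<noteq> 0" using t by (simp add: is_tree_def simple_graph_def)
  with less.prems(2) have "card V = 2 \<or> 4 \<le> card V" by presburger
  then consider "card V = 2" | "4 \<le> card V" by blast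
  then show ?case
  proof cases
    case 1
    then obtain a b where V: "V = {a, b}" "a \<noteq> b" by (auto simp: card_2_iff)
    then have E: "E = {{a, b}}" by (rule is_tree_two_vertices[OF t])
    have "vertex_label E (\<lambda>_. 1) v = (if v \<in> {a, b} then 1 else 0)" for v
      using vertex_label_insert[of "{}" "{a, b}"] vertex_label_eq_0[of "{}"] E by simp
    then have "balanced_labeling E (\<lambda>_. 1)" by (simp add: balanced_labeling_def)
    then show ?thesis using E by auto
  next
    case 2
    then have "3 \<le> card V" by simp
    obtain V' E' u w x where t': "is_tree V' E'" and card: "card V' = card V - 2"
      and E: "E = insert {u, w} (insert {w, x} E')"
      and new: "{u, w} \<notin> E'" "{w, x} \<notin> E'" and ux: "u \<noteq> x"
      and isolated: "\<And>e. e \<in> E' \<Longrightarrow> u \<notin> e"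
      using tree_two_vertex_reduction[OF t \<open>3 \<le> card V\<close>] by blast
    obtain g where g: "balanced_labeling E' g" "sum g E' \<in> {-1, 1}"
      using less.hyps[OF _ t'] card less.prems(2) 2 by force
    have "finite E'" using t' simple_graph_finite_edges by (auto simp: is_tree_def)
    then obtain f where "balanced_labeling E f" "sum f E = sum g E'"
      using balanced_labeling_extend[OF _ new ux isolated g(1)] unfolding E by metis
    then show ?thesis using g(2) by auto
  qed
qed

lemma sum_abs_le_1_eq_card_diff:
  fixes h :: "'a \<Rightarrow> int"
  assumes "finite A" "\<And>x. x \<in> A \<Longrightarrow> \<bar>h x\<bar> \<le> 1"
  shows "sum h A = int (card {x\<in>A. h x = 1}) - int (card {x\<in>A. h x = -1})"
proof -
  have card_eq_sum: "int (card {x\<in>A. P x}) = (\<Sum>x\<in>A. if P x then 1 else 0)" for P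
    using assms(1) by (simp add: sum.inter_filter[symmetric])
  have "sum h A = (\<Sum>x\<in>A. (if h x = 1 then 1 else 0) - (if h x = -1 then 1 else 0))"
  proof (rule sum.cong)
    fix x assume "x \<in> A"
    then have "h x = -1 \<or> h x = 0 \<or> h x = 1" using assms(2) by fastforce
    then show "h x = (if h x = 1 then 1 else 0) - (if h x = -1 then 1 else 0)" by auto
  qed simp
  also have "\<dots> = int (card {x\<in>A. h x = 1}) - int (card {x\<in>A. h x = -1})"
    by (simp add: sum_subtractf card_eq_sum)
  finally show ?thesis .
qed

lemma sum_vertex_label:
  assumes "simple_graph V E"
  shows "(\<Sum>v\<in>V. vertex_label E f v) = 2 * sum f E"
proof -
  have fin: "finite V" "finite E"
    using assms simple_graph_finite_edges by (auto simp: simple_graph_def)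
  have "(\<Sum>v\<in>V. vertex_label E f v) = (\<Sum>e\<in>E. \<Sum>v\<in>{v \<in> V. v \<in> e}. f e)"
    unfolding vertex_label_def by (rule sum.swap_restrict[OF fin])
  also have "\<dots> = (\<Sum>e\<in>E. 2 * f e)"
  proof (rule sum.cong)
    fix e assume "e \<in> E"
    then have "{v \<in> V. v \<in> e} = e" "card e = 2" using assms by (auto simp: simple_graph_def)
    then show "(\<Sum>v\<in>{v \<in> V. v \<in> e}. f e) = 2 * f e" by simp
  qed simp
  finally show ?thesis by (simp add: sum_distrib_left)
qed

theorem proposition1:
  fixes V :: "'a set" and E :: "'a set set"
  assumes "is_tree V E" and "even (card V)"
  shows "\<exists>f :: 'a set \<Rightarrow> int.
           (\<forall>e\<in>E. f e \<in> {-1, 1})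
         \<and> \<bar>int (edge_count E f (-1)) - int (edge_count E f 1)\<bar> = 1
         \<and> (\<forall>v\<in>V. \<bar>vertex_label E f v\<bar> \<le> 1)
         \<and> \<bar>int (vertex_count V E f (-1)) - int (vertex_count V E f 1)\<bar> = 2"
proof -
  have sg: "simple_graph V E" using assms(1) by (simp add: is_tree_def)
  obtain f where f: "balanced_labeling E f" and total: "sum f E \<in> {-1, 1}"
    using even_tree_balanced_labeling[OF assms] by blast
  have edges: "sum f E = int (edge_count E f 1) - int (edge_count E f (-1))"
    using f sum_abs_le_1_eq_card_diff[OF simple_graph_finite_edges[OF sg], of f]
    by (force simp: balanced_labeling_def edge_count_def)
  have vertices: "(\<Sum>v\<in>V. vertex_label E f v)
      = int (vertex_count V E f 1) - int (vertex_count V E f (-1))"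
    using f sg sum_abs_le_1_eq_card_diff[of V "vertex_label E f"]
    by (simp add: balanced_labeling_def vertex_count_def simple_graph_def)
  show ?thesis
    using f total edges vertices sum_vertex_label[OF sg, of f]
    by (intro exI[of _ f]) (auto simp: balanced_labeling_def)
qed

end
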